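(* Let $n=2k$ be a positive even integer, $\theta=\frac{2\pi}{n+2}$, and let $\mathcal{N}=\{(\ell_j,r_j): j\in[1:n]\}$ be given by $$\ell_{2i}=\ell_{2i-1}=\frac{2\sin\theta\,\sin(i\theta)}{\cos(i\theta)-\cos((i+1)\theta)},\qquad r_{2i}=r_{2i-1}=\frac{2\sin\theta\,\sin(i\theta)}{\cos((i-1)\theta)-\cos(i\theta)},\qquad i\in[1:k].$$ Then all $\ell_j,r_j$ are positive, $\ell_1\le\cdots\le\ell_n$, $r_1\ge\cdots\ge r_n$, $\mathsf{C}_1(\mathcal{N}_j)=1$ for every $j\in[1:n]$ (so $\mathsf{C}_1(\mathcal{N})=1$), and $\mathsf{C}_n(\mathcal{N})=2+2\cos\theta$. Consequently $\frac{\mathsf{C}_1(\mathcal{N})}{\mathsf{C}_n(\mathcal{N})}=\frac{1}{2+2\cos\left(\frac{2\pi}{n+2}\right)}$. Moreover, the rate $2+2\cos\theta$ is achieved by the schedule with $\lambda_{\{1,3,\dots,2k-1\}}=\lambda_{\{2,4,\dots,2k\}}=\frac12$ and $\lambda_{\mathcal{S}}=0$ otherwise.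
   Context: For a network $\mathcal{N}=\{(\ell_i,r_i): i\in[1:n]\}$ with nonnegative link capacities, with complements inside $[1:n]$ and maxima over empty sets equal to $0$, the approximate capacity is $\mathsf{C}_n(\mathcal{N})=\max_{\boldsymbol\lambda}\min_{\Omega\subseteq[1:n]}\sum_{\mathcal{S}\subseteq[1:n]}\lambda_{\mathcal{S}}\big(\max_{i\in\mathcal{S}^c\cap\Omega^c}\ell_i+\max_{i\in\mathcal{S}\cap\Omega}r_i\big)$, the maximum being over schedules $\boldsymbol\lambda=(\lambda_{\mathcal{S}})_{\mathcal{S}\subseteq[1:n]}$, $\lambda_{\mathcal{S}}\ge0$, $\sum_{\mathcal{S}}\lambda_{\mathcal{S}}=1$; the rate achieved by a fixed schedule is the inner minimum. $\mathsf{C}_1(\mathcal{N}_i)=\frac{\ell_ir_i}{\ell_i+r_i}$ and $\mathsf{C}_1(\mathcal{N})=\max_i\mathsf{C}_1(\mathcal{N}_i)$. *)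

theory Defs
  imports "HOL-Analysis.Analysis"
begin

(* A network with n relays is given by two link-capacity functions l r :: nat => real,
   of which only the values on the index set [1:n] = {1..n} matter. *)

definition maxover :: "nat set \<Rightarrow> (nat \<Rightarrow> real) \<Rightarrow> real" where
  "maxover A f = (if A = {} then 0 else Max (f ` A))"

definition is_schedule :: "nat \<Rightarrow> (nat set \<Rightarrow> real) \<Rightarrow> bool" where
  "is_schedule n lam \<longleftrightarrow> (\<forall>S \<in> Pow {1..n}. lam S \<ge> 0) \<and> (\<Sum>S \<in> Pow {1..n}. lam S) = 1"

definition sched_rate :: "nat \<Rightarrow> (nat \<Rightarrow> real) \<Rightarrow> (nat \<Rightarrow> real) \<Rightarrow> (nat set \<Rightarrow> real) \<Rightarrow> real" where
  "sched_rate n l r lam =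
     Min ((\<lambda>\<Omega>. \<Sum>S \<in> Pow {1..n}.
              lam S * (maxover (({1..n} - S) \<inter> ({1..n} - \<Omega>)) l + maxover (S \<inter> \<Omega>) r))
          ` Pow {1..n})"

text \<open>Approximate capacity C_n: the best rate over all schedules (supremum; it is attained).\<close>
definition Cn :: "nat \<Rightarrow> (nat \<Rightarrow> real) \<Rightarrow> (nat \<Rightarrow> real) \<Rightarrow> real" where
  "Cn n l r = Sup {sched_rate n l r lam | lam. is_schedule n lam}"

definition C1_single :: "real \<Rightarrow> real \<Rightarrow> real" where
  "C1_single a b = a * b / (a + b)"

definition C1 :: "nat \<Rightarrow> (nat \<Rightarrow> real) \<Rightarrow> (nat \<Rightarrow> real) \<Rightarrow> real" where
  "C1 n l r = maxover {1..n} (\<lambda>i. C1_single (l i) (r i))"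

end

theory Submission
  imports Defs
begin

text \<open>
  Put \<open>\<theta> = \<pi>/(k+1)\<close> and let \<open>\<ell>\<^sub>i, r\<^sub>i\<close> be the common capacities of relays \<open>2i-1, 2i\<close>.
  The sum-to-product formulas give \<open>\<ell>\<^sub>i + r\<^sub>i\<^sub>+\<^sub>1 = 2 + 2 cos \<theta>\<close> for \<open>0 \<le> i \<le> k\<close>, where
  \<open>\<ell>\<^sub>0 = r\<^sub>k\<^sub>+\<^sub>1 = 0\<close>, and \<open>1/\<ell>\<^sub>i + 1/r\<^sub>i = 1\<close>, whence \<open>C\<^sub>1 = 1\<close>.
  The odd and the even relays each carry a copy of every pair. For a cut \<open>\<Omega>\<close> let \<open>a\<close> be the
  last pair whose copy lies outside \<open>\<Omega>\<close>; the copy of \<open>a+1\<close> lies inside, so either half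
  contributes at least \<open>\<ell>\<^sub>a + r\<^sub>a\<^sub>+\<^sub>1 = 2 + 2 cos \<theta>\<close>, with equality at \<open>\<Omega> = \<emptyset>\<close>. Conversely the
  cut \<open>\<Omega> = [1:n]\<close> bounds the rate of every schedule by \<open>max r\<^sub>i = r\<^sub>1 = 2 + 2 cos \<theta>\<close>.
\<close>

definition lcap :: "real \<Rightarrow> nat \<Rightarrow> real" where
  "lcap t i = 2 * sin t * sin (real i * t) / (cos (real i * t) - cos (real (i + 1) * t))"

definition rcap :: "real \<Rightarrow> nat \<Rightarrow> real" where
  "rcap t i = 2 * sin t * sin (real i * t) / (cos ((real i - 1) * t) - cos (real i * t))"

lemma lcap_eq: "lcap t i = 2 * sin t * sin (real i * t) / (cos (real i * t) - cos (real i * t + t))"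
  by (simp add: lcap_def algebra_simps)

lemma rcap_eq: "rcap t i = 2 * sin t * sin (real i * t) / (cos (real i * t - t) - cos (real i * t))"
  by (simp add: rcap_def algebra_simps)

lemma rcap_Suc_eq:
  "rcap t (Suc i) = 2 * sin t * sin (real i * t + t) / (cos (real i * t) - cos (real i * t + t))"
  by (simp add: rcap_def algebra_simps)

lemma lcap_0 [simp]: "lcap t 0 = 0"
  by (simp add: lcap_def)

lemma rcap_eq_0: "real i * t = pi \<Longrightarrow> rcap t i = 0"
  by (simp add: rcap_def)

lemma cos_step_less:
  assumes "0 < t" "real (Suc i) * t \<le> pi"
  shows "cos (real i * t + t) < cos (real i * t)"
  using assms by (intro cos_monotone_0_pi) (auto simp: algebra_simps)

lemma sin_mult_pos:
  assumes "0 < t" "1 \<le> i" "real i * t < pi"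
  shows "0 < sin (real i * t)"
  using assms by (intro sin_gt_zero) auto

lemma sin_pos_if_mult_less_pi:
  assumes "0 < t" "1 \<le> i" "real i * t < pi"
  shows "0 < sin t"
proof -
  have "t \<le> real i * t" using assms by simp
  then show ?thesis using assms by (intro sin_gt_zero) linarith+
qed

lemma lcap_pos:
  assumes "0 < t" "1 \<le> i" "real (Suc i) * t \<le> pi"
  shows "0 < lcap t i"
proof -
  have "real i * t < pi" using assms by (simp add: algebra_simps)
  then show ?thesis
    unfolding lcap_eq using assms cos_step_less sin_mult_pos sin_pos_if_mult_less_pi by simp
qed

lemma rcap_pos:
  assumes "0 < t" "1 \<le> i" "real i * t < pi"
  shows "0 < rcap t i"
proof -
  obtain h where i: "i = Suc h" using assms(2) by (cases i) auto
  show ?thesis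
    unfolding i rcap_Suc_eq
    using assms cos_step_less[of t h] sin_mult_pos[of t i] sin_pos_if_mult_less_pi[of t i]
    by (simp add: i algebra_simps)
qed

lemma lcap_add_rcap_Suc:
  assumes "0 < t" "real (Suc i) * t \<le> pi"
  shows "lcap t i + rcap t (Suc i) = 2 + 2 * cos t"
proof -
  define x where "x = real i * t"
  have "2 * sin t * sin x + 2 * sin t * sin (x + t) = (2 + 2 * cos t) * (cos x - cos (x + t))"
  proof -
    have "sin t ^ 2 + cos t ^ 2 = 1" by simp
    then show ?thesis unfolding sin_add cos_add by algebra
  qed
  moreover have "cos x - cos (x + t) \<noteq> 0" using cos_step_less[OF assms] by (simp add: x_def)
  ultimately show ?thesis
    unfolding lcap_eq rcap_Suc_eq x_def[symmetric] by (simp add: add_divide_distrib[symmetric])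
qed

lemma C1_single_eq_1_iff:
  assumes "0 < a" "0 < b"
  shows "C1_single a b = 1 \<longleftrightarrow> 1 / a + 1 / b = 1"
  using assms by (auto simp: C1_single_def field_simps)

lemma C1_single_lcap_rcap:
  assumes "0 < t" "1 \<le> i" "real (Suc i) * t \<le> pi"
  shows "C1_single (lcap t i) (rcap t i) = 1"
proof -
  define x where "x = real i * t"
  have "real i * t < pi" using assms by (simp add: algebra_simps)
  then have "0 < 2 * sin t * sin x"
    using assms sin_mult_pos sin_pos_if_mult_less_pi by (simp add: x_def)
  moreover have "cos (x - t) - cos x + (cos x - cos (x + t)) = 2 * sin t * sin x"
    unfolding cos_diff cos_add by algebra
  ultimately have "1 / lcap t i + 1 / rcap t i = 1"
    unfolding lcap_eq rcap_eq x_def[symmetric] by (auto simp: add_divide_distrib[symmetric])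
  then show ?thesis
    using C1_single_eq_1_iff lcap_pos[OF assms] rcap_pos[OF assms(1,2)] \<open>real i * t < pi\<close> by blast
qed

lemma lcap_le_lcap_Suc:
  assumes "0 < t" "real (Suc (Suc i)) * t \<le> pi"
  shows "lcap t i \<le> lcap t (Suc i)"
proof -
  define x where "x = real i * t"
  have "2 * t \<le> real (Suc (Suc i)) * t"
    using assms mult_right_mono[of 2 "real (Suc (Suc i))" t] by simp
  then have "t < pi" using assms by linarith
  then have "sin t > 0" using assms by (intro sin_gt_zero) auto
  have d0: "0 < cos x - cos (x + t)" using cos_step_less[of t i] assms by (simp add: x_def algebra_simps)
  have d1: "0 < cos (x + t) - cos (x + t + t)"
    using cos_step_less[of t "Suc i"] assms by (simp add: x_def algebra_simps)
  have "sin (x + t) * (cos x - cos (x + t)) - sin x * (cos (x + t) - cos (x + t + t))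
      = sin t * (1 - cos t)"
  proof -
    have "sin t ^ 2 + cos t ^ 2 = 1" "sin x ^ 2 + cos x ^ 2 = 1" by simp_all
    then show ?thesis unfolding sin_add cos_add by algebra
  qed
  also have "\<dots> \<ge> 0" using \<open>sin t > 0\<close> by simp
  finally have "sin x * (cos (x + t) - cos (x + t + t)) \<le> sin (x + t) * (cos x - cos (x + t))"
    by simp
  then have "sin x / (cos x - cos (x + t)) \<le> sin (x + t) / (cos (x + t) - cos (x + t + t))"
    using d0 d1 by (simp add: divide_simps mult.commute)
  then have "2 * sin t * (sin x / (cos x - cos (x + t)))
      \<le> 2 * sin t * (sin (x + t) / (cos (x + t) - cos (x + t + t)))"
    using \<open>sin t > 0\<close> by (intro mult_left_mono) auto
  moreover have "real (Suc i) * t = x + t" by (simp add: x_def algebra_simps)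
  ultimately show ?thesis unfolding lcap_eq x_def[symmetric] by simp
qed

lemma lcap_mono:
  assumes "0 < t" "i \<le> j" "real (Suc j) * t \<le> pi"
  shows "lcap t i \<le> lcap t j"
proof (rule lift_Suc_mono_le_ivl[where N = "{..<j}"])
  fix n assume "n \<in> {..<j}"
  then have "real (Suc (Suc n)) * t \<le> real (Suc j) * t" using assms(1) by simp
  then show "lcap t n \<le> lcap t (Suc n)"
    by (rule lcap_le_lcap_Suc[OF assms(1) order_trans[OF _ assms(3)]])
qed (use assms in auto)

lemma rcap_antimono:
  assumes "0 < t" "1 \<le> i" "i \<le> j" "real (Suc j) * t \<le> pi"
  shows "rcap t j \<le> rcap t i"
proof -
  have "real (Suc i) * t \<le> real (Suc j) * t" using assms by (intro mult_right_mono) auto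
  then have i: "real (Suc i) * t \<le> pi" using assms by linarith
  have pi_i: "real i * t < pi" and pi_j: "real j * t < pi"
    using i assms by (simp_all add: algebra_simps)
  have lpos: "0 < lcap t i" "0 < lcap t j" using lcap_pos assms i by auto
  have rpos: "0 < rcap t i" "0 < rcap t j"
    using rcap_pos[of t i] rcap_pos[of t j] assms pi_i pi_j by auto
  \<comment> \<open>\<open>1/\<ell> + 1/r = 1\<close> turns the monotonicity of \<open>\<ell>\<close> into the antitonicity of \<open>r\<close>\<close>
  have "1 / lcap t i + 1 / rcap t i = 1" "1 / lcap t j + 1 / rcap t j = 1"
    using C1_single_lcap_rcap[of t i] C1_single_lcap_rcap[of t j] C1_single_eq_1_iff assms i lpos rpos
    by auto
  moreover have "1 / lcap t j \<le> 1 / lcap t i"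
    using lcap_mono[OF assms(1,3,4)] lpos by (simp add: frac_le)
  ultimately have "1 / rcap t i \<le> 1 / rcap t j" by linarith
  then show ?thesis using rpos by (simp add: frac_le_eq divide_simps)
qed

lemma maxover_ge: "finite A \<Longrightarrow> x \<in> A \<Longrightarrow> f x \<le> maxover A f"
  unfolding maxover_def by auto

lemma maxover_nonneg: "finite A \<Longrightarrow> \<forall>x\<in>A. 0 \<le> f x \<Longrightarrow> 0 \<le> maxover A f"
  unfolding maxover_def by (auto intro: order.trans[OF _ Max_ge])

lemma maxover_le: "finite A \<Longrightarrow> \<forall>x\<in>A. f x \<le> M \<Longrightarrow> 0 \<le> M \<Longrightarrow> maxover A f \<le> M"
  unfolding maxover_def by auto

text \<open>
  Not the term of a single schedule state: for a block \<open>X\<close> of a two-block partition it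
  collects the listening part of one state and the transmitting part of the other.
\<close>
definition cut_term :: "nat set \<Rightarrow> nat set \<Rightarrow> (nat \<Rightarrow> real) \<Rightarrow> (nat \<Rightarrow> real) \<Rightarrow> real" where
  "cut_term X \<Omega> l r = maxover (X - \<Omega>) l + maxover (X \<inter> \<Omega>) r"

lemma cut_term_ge_staircase:
  assumes X: "finite X" "\<forall>x\<in>X. 0 \<le> l x \<and> 0 \<le> r x"
    and e: "\<forall>i\<in>{1..k}. e i \<in> X \<and> l (e i) = L i \<and> r (e i) = R i"
    and ends: "L 0 \<le> 0" "R (Suc k) \<le> 0"
    and steps: "\<forall>a\<le>k. c \<le> L a + R (Suc a)"
  shows "c \<le> cut_term X \<Omega> l r"
proof -
  \<comment> \<open>\<open>a\<close> is the last index whose relay lies outside \<open>\<Omega>\<close>, so that of \<open>a + 1\<close> lies inside\<close>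
  define I where "I = {i \<in> {1..k}. e i \<notin> \<Omega>}"
  define a where "a = Max (insert 0 I)"
  have finI: "finite I" by (simp add: I_def)
  have a: "a \<in> insert 0 I" "\<forall>i\<in>I. i \<le> a" using finI Max_in[of "insert 0 I"] unfolding a_def by auto
  have "a \<le> k" using a by (auto simp: I_def)
  have "L a \<le> maxover (X - \<Omega>) l"
  proof (cases "a = 0")
    case True
    then show ?thesis using ends(1) maxover_nonneg[of "X - \<Omega>" l] X by fastforce
  next
    case False
    then have "e a \<in> X - \<Omega>" "l (e a) = L a" using a e by (auto simp: I_def)
    then show ?thesis using maxover_ge[of "X - \<Omega>" "e a" l] X by simp
  qed
  moreover have "R (Suc a) \<le> maxover (X \<inter> \<Omega>) r"
  proof (cases "a = k")
    case True
    then show ?thesis using ends(2) maxover_nonneg[of "X \<inter> \<Omega>" r] X by fastforce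
  next
    case False
    then have "Suc a \<in> {1..k}" "Suc a \<notin> I" using \<open>a \<le> k\<close> a(2) by auto
    then have "e (Suc a) \<in> X \<inter> \<Omega>" "r (e (Suc a)) = R (Suc a)" using e by (auto simp: I_def)
    then show ?thesis using maxover_ge[of "X \<inter> \<Omega>" "e (Suc a)" r] X by simp
  qed
  ultimately show ?thesis using steps \<open>a \<le> k\<close> unfolding cut_term_def by fastforce
qed

definition two_set_schedule :: "nat set \<Rightarrow> nat set \<Rightarrow> nat set \<Rightarrow> real" where
  "two_set_schedule A B S = (if S = A \<or> S = B then 1/2 else 0)"

lemma sum_two_set_schedule:
  assumes "A \<noteq> B" "A \<subseteq> {1..n}" "B \<subseteq> {1..n}"
  shows "(\<Sum>S \<in> Pow {1..n}. two_set_schedule A B S * g S) = (g A + g B) / 2"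
proof -
  have "(\<Sum>S \<in> Pow {1..n}. two_set_schedule A B S * g S)
      = (\<Sum>S \<in> {A, B}. two_set_schedule A B S * g S)"
    using assms by (intro sum.mono_neutral_right) (auto simp: two_set_schedule_def)
  also have "\<dots> = (g A + g B) / 2" using assms(1) by (simp add: two_set_schedule_def)
  finally show ?thesis .
qed

lemma is_schedule_two_set_schedule:
  assumes "A \<noteq> B" "A \<subseteq> {1..n}" "B \<subseteq> {1..n}"
  shows "is_schedule n (two_set_schedule A B)"
  using sum_two_set_schedule[OF assms, of "\<lambda>_. 1"]
  by (simp add: is_schedule_def two_set_schedule_def)

lemma sched_rate_two_set_schedule:
  assumes "A \<noteq> B" "A \<inter> B = {}" "A \<union> B = {1..n}"
  shows "sched_rate n l r (two_set_schedule A B)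
    = Min ((\<lambda>\<Omega>. (cut_term A \<Omega> l r + cut_term B \<Omega> l r) / 2) ` Pow {1..n})"
proof -
  have sub: "A \<subseteq> {1..n}" "B \<subseteq> {1..n}" using assms(3) by auto
  have compl: "{1..n} - A = B" "{1..n} - B = A" using assms(2,3) by auto
  have "(\<Sum>S \<in> Pow {1..n}. two_set_schedule A B S
          * (maxover (({1..n} - S) \<inter> ({1..n} - \<Omega>)) l + maxover (S \<inter> \<Omega>) r))
      = (cut_term A \<Omega> l r + cut_term B \<Omega> l r) / 2" for \<Omega>
  proof -
    have "({1..n} - A) \<inter> ({1..n} - \<Omega>) = B - \<Omega>" "({1..n} - B) \<inter> ({1..n} - \<Omega>) = A - \<Omega>"
      using compl by auto
    then show ?thesis unfolding sum_two_set_schedule[OF assms(1) sub] cut_term_def by simp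
  qed
  then show ?thesis unfolding sched_rate_def by (intro arg_cong[where f = Min] image_cong) auto
qed

lemma sched_rate_le_bound:
  assumes "is_schedule n lam" "\<forall>j\<in>{1..n}. r j \<le> M" "0 \<le> M"
  shows "sched_rate n l r lam \<le> M"
proof -
  have "sched_rate n l r lam \<le> (\<Sum>S \<in> Pow {1..n}.
      lam S * (maxover (({1..n} - S) \<inter> ({1..n} - {1..n})) l + maxover (S \<inter> {1..n}) r))"
    unfolding sched_rate_def by (rule Min_le) (simp, intro imageI, simp)
  also have "\<dots> \<le> (\<Sum>S \<in> Pow {1..n}. lam S * M)"
  proof (rule sum_mono)
    fix S assume S: "S \<in> Pow {1..n}"
    have "maxover (S \<inter> {1..n}) r \<le> M" using assms(2,3) by (intro maxover_le) auto
    then show "lam S * (maxover (({1..n} - S) \<inter> ({1..n} - {1..n})) l + maxover (S \<inter> {1..n}) r)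
        \<le> lam S * M"
      using assms(1) S by (simp add: maxover_def is_schedule_def mult_left_mono)
  qed
  also have "\<dots> = M" using assms(1) by (simp add: is_schedule_def sum_distrib_right[symmetric])
  finally show ?thesis .
qed

lemma Cn_eqI:
  assumes "is_schedule n lam" "sched_rate n l r lam = c"
    and "\<And>mu. is_schedule n mu \<Longrightarrow> sched_rate n l r mu \<le> c"
  shows "Cn n l r = c"
  unfolding Cn_def using assms by (intro cSup_eq_maximum) auto

lemma C1_eqI:
  assumes "1 \<le> n" "\<forall>j\<in>{1..n}. C1_single (l j) (r j) = c"
  shows "C1 n l r = c"
proof -
  have "(\<lambda>j. C1_single (l j) (r j)) ` {1..n} = {c}" using assms by force
  then show ?thesis using assms(1) by (simp add: C1_def maxover_def)
qed

locale paired_network =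
  fixes k :: nat and t :: real and l r :: "nat \<Rightarrow> real"
  assumes k_pos: "1 \<le> k"
    and t: "real (Suc k) * t = pi"
    and l_eq: "j \<in> {1..2*k} \<Longrightarrow> l j = lcap t ((j + 1) div 2)"
    and r_eq: "j \<in> {1..2*k} \<Longrightarrow> r j = rcap t ((j + 1) div 2)"
begin

lemma t_pos: "0 < t"
proof -
  have "0 < real (Suc k) * t" using t by simp
  then show ?thesis by (simp add: zero_less_mult_iff)
qed

lemma Suc_mult_le_pi: "i \<le> k \<Longrightarrow> real (Suc i) * t \<le> pi"
  using t t_pos by (metis mult_right_mono Suc_le_mono of_nat_le_iff less_imp_le)

lemma mult_less_pi: "i \<le> k \<Longrightarrow> real i * t < pi"
  using Suc_mult_le_pi[of i] t_pos by (simp add: algebra_simps)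

lemma half_index: "j \<in> {1..2*k} \<Longrightarrow> (j + 1) div 2 \<in> {1..k}"
  by auto

lemma capacities_pos: "j \<in> {1..2*k} \<Longrightarrow> 0 < l j \<and> 0 < r j"
  using half_index[of j] l_eq r_eq lcap_pos[OF t_pos] rcap_pos[OF t_pos] Suc_mult_le_pi mult_less_pi
  by auto

lemma l_mono: "1 \<le> i \<Longrightarrow> i \<le> j \<Longrightarrow> j \<le> 2*k \<Longrightarrow> l i \<le> l j"
  using half_index[of i] half_index[of j] l_eq[of i] l_eq[of j]
    lcap_mono[OF t_pos div_le_mono[of "i + 1" "j + 1" 2] Suc_mult_le_pi]
  by auto

lemma r_antimono: "1 \<le> i \<Longrightarrow> i \<le> j \<Longrightarrow> j \<le> 2*k \<Longrightarrow> r j \<le> r i"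
  using half_index[of i] half_index[of j] r_eq[of i] r_eq[of j]
    rcap_antimono[OF t_pos _ div_le_mono[of "i + 1" "j + 1" 2] Suc_mult_le_pi]
  by auto

lemma C1_single_eq_1: "j \<in> {1..2*k} \<Longrightarrow> C1_single (l j) (r j) = 1"
  using half_index[of j] l_eq r_eq C1_single_lcap_rcap[OF t_pos] Suc_mult_le_pi by auto

lemma lcap_k: "lcap t k = 2 + 2 * cos t"
  using lcap_add_rcap_Suc[OF t_pos Suc_mult_le_pi[of k]] rcap_eq_0[OF t] by simp

lemma rcap_1: "rcap t 1 = 2 + 2 * cos t"
  using lcap_add_rcap_Suc[OF t_pos Suc_mult_le_pi[of 0]] by simp

lemma cut_term_ge:
  assumes "X \<subseteq> {1..2*k}" "\<forall>i\<in>{1..k}. e i \<in> X \<and> (e i + 1) div 2 = i"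
  shows "2 + 2 * cos t \<le> cut_term X \<Omega> l r"
proof (rule cut_term_ge_staircase[where L = "lcap t" and R = "rcap t" and e = e])
  show "finite X" using assms(1) finite_subset by blast
  show "\<forall>x\<in>X. 0 \<le> l x \<and> 0 \<le> r x" using assms(1) capacities_pos by (auto simp: less_imp_le)
  show "\<forall>i\<in>{1..k}. e i \<in> X \<and> l (e i) = lcap t i \<and> r (e i) = rcap t i"
    using assms l_eq r_eq by auto
  show "\<forall>a\<le>k. 2 + 2 * cos t \<le> lcap t a + rcap t (Suc a)"
    using lcap_add_rcap_Suc[OF t_pos Suc_mult_le_pi] by simp
qed (simp_all add: rcap_eq_0[OF t])

lemma cut_term_empty_le:
  assumes "X \<subseteq> {1..2*k}"
  shows "cut_term X {} l r \<le> 2 + 2 * cos t"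
proof -
  have "maxover X l \<le> lcap t k"
  proof (rule maxover_le)
    show "finite X" using assms finite_subset by blast
    show "\<forall>j\<in>X. l j \<le> lcap t k" using assms l_mono[of _ "2*k"] l_eq[of "2*k"] k_pos by auto
    show "0 \<le> lcap t k" using lcap_pos[OF t_pos k_pos Suc_mult_le_pi] by simp
  qed
  then show ?thesis by (simp add: cut_term_def maxover_def lcap_k)
qed

lemma odd_relays_ne_even_relays: "{j \<in> {1..2*k}. odd j} \<noteq> {j \<in> {1..2*k}. even j}"
proof -
  have "1 \<in> {j \<in> {1..2*k}. odd j}" "1 \<notin> {j \<in> {1..2*k}. even j}" using k_pos by auto
  then show ?thesis by blast
qed

lemma alternating_sched_rate:
  "sched_rate (2*k) l r (two_set_schedule {j \<in> {1..2*k}. odd j} {j \<in> {1..2*k}. even j})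
    = 2 + 2 * cos t"
proof -
  let ?O = "{j \<in> {1..2*k}. odd j}" and ?E = "{j \<in> {1..2*k}. even j}"
  let ?g = "\<lambda>\<Omega>. (cut_term ?O \<Omega> l r + cut_term ?E \<Omega> l r) / 2"
  have rate: "sched_rate (2*k) l r (two_set_schedule ?O ?E) = Min (?g ` Pow {1..2*k})"
    by (rule sched_rate_two_set_schedule[OF odd_relays_ne_even_relays]) auto
  have lower: "2 + 2 * cos t \<le> ?g \<Omega>" for \<Omega>
  proof -
    have "2 + 2 * cos t \<le> cut_term ?O \<Omega> l r"
      by (rule cut_term_ge[where e = "\<lambda>i. 2 * i - 1"]) auto
    moreover have "2 + 2 * cos t \<le> cut_term ?E \<Omega> l r"
      by (rule cut_term_ge[where e = "\<lambda>i. 2 * i"]) auto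
    ultimately show ?thesis by simp
  qed
  have "cut_term ?O {} l r \<le> 2 + 2 * cos t" "cut_term ?E {} l r \<le> 2 + 2 * cos t"
    by (intro cut_term_empty_le; auto)+
  then have "?g {} \<le> 2 + 2 * cos t" by simp
  then have "?g {} = 2 + 2 * cos t" using lower[of "{}"] by simp
  then show ?thesis unfolding rate using lower by (intro Min_eqI) force+
qed

lemma alternating_is_schedule:
  "is_schedule (2*k) (two_set_schedule {j \<in> {1..2*k}. odd j} {j \<in> {1..2*k}. even j})"
  by (rule is_schedule_two_set_schedule[OF odd_relays_ne_even_relays]) auto

lemma Cn_eq: "Cn (2*k) l r = 2 + 2 * cos t"
proof (rule Cn_eqI[OF alternating_is_schedule alternating_sched_rate])
  fix mu assume "is_schedule (2*k) mu"
  moreover have "\<forall>j\<in>{1..2*k}. r j \<le> 2 + 2 * cos t"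
    using r_antimono[of 1] r_eq[of 1] rcap_1 k_pos by simp
  moreover have "0 \<le> 2 + 2 * cos t" using cos_ge_minus_one[of t] by linarith
  ultimately show "sched_rate (2*k) l r mu \<le> 2 + 2 * cos t" by (rule sched_rate_le_bound)
qed

end

theorem mainTheorem6:
  fixes k :: nat and l r :: "nat \<Rightarrow> real"
  assumes k_pos: "k \<ge> 1"
    and l_def: "\<forall>j \<in> {1..2*k}. l j =
        (let i = (j + 1) div 2; \<theta> = 2 * pi / (real (2*k) + 2) in
          2 * sin \<theta> * sin (real i * \<theta>) / (cos (real i * \<theta>) - cos (real (i + 1) * \<theta>)))"
    and r_def: "\<forall>j \<in> {1..2*k}. r j =
        (let i = (j + 1) div 2; \<theta> = 2 * pi / (real (2*k) + 2) in
          2 * sin \<theta> * sin (real i * \<theta>) / (cos ((real i - 1) * \<theta>) - cos (real i * \<theta>)))"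
  shows "(\<forall>j \<in> {1..2*k}. l j > 0 \<and> r j > 0)
    \<and> (\<forall>i j. 1 \<le> i \<and> i \<le> j \<and> j \<le> 2*k \<longrightarrow> l i \<le> l j)
    \<and> (\<forall>i j. 1 \<le> i \<and> i \<le> j \<and> j \<le> 2*k \<longrightarrow> r i \<ge> r j)
    \<and> (\<forall>j \<in> {1..2*k}. C1_single (l j) (r j) = 1)
    \<and> C1 (2*k) l r = 1
    \<and> Cn (2*k) l r = 2 + 2 * cos (2 * pi / (real (2*k) + 2))
    \<and> C1 (2*k) l r / Cn (2*k) l r = 1 / (2 + 2 * cos (2 * pi / (real (2*k) + 2)))
    \<and> (let lam = (\<lambda>S. if S = {j \<in> {1..2*k}. odd j} \<or> S = {j \<in> {1..2*k}. even j}
                      then 1/2 else 0 :: real)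
       in is_schedule (2*k) lam
          \<and> sched_rate (2*k) l r lam = 2 + 2 * cos (2 * pi / (real (2*k) + 2)))"
proof -
  define t where "t = 2 * pi / (real (2*k) + 2)"
  interpret paired_network k t l r
  proof
    show "real (Suc k) * t = pi" by (simp add: t_def field_simps)
    show "l j = lcap t ((j + 1) div 2)" if "j \<in> {1..2*k}" for j
      using l_def that by (simp add: Let_def lcap_def t_def)
    show "r j = rcap t ((j + 1) div 2)" if "j \<in> {1..2*k}" for j
      using r_def that by (simp add: Let_def rcap_def t_def)
  qed (rule k_pos)
  have C1: "C1 (2*k) l r = 1" using k_pos C1_single_eq_1 by (intro C1_eqI) auto
  have "(\<lambda>S. if S = {j \<in> {1..2*k}. odd j} \<or> S = {j \<in> {1..2*k}. even j} then 1/2 else 0 :: real)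
      = two_set_schedule {j \<in> {1..2*k}. odd j} {j \<in> {1..2*k}. even j}"
    by (simp add: two_set_schedule_def fun_eq_iff)
  then show ?thesis
    using capacities_pos l_mono r_antimono C1_single_eq_1 C1 Cn_eq alternating_sched_rate
      alternating_is_schedule
    unfolding t_def[symmetric] Let_def by simp
qed

end
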